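(* Let $\alpha\in(0,\tfrac12]$ and $X_A,X_B>0$ satisfy $$\sqrt{\tfrac{8\alpha}{1-\alpha}}-\tfrac{2\alpha}{1-\alpha}\le\frac{X_B}{X_A}<\min\Big\{1,\sqrt{\tfrac{1-\alpha}{3\alpha}}\Big\},$$ and suppose the solution function $S$ has exactly one zero $\sigma^*$ in $(0,\infty)$. Then there exists a pre-commitment $p\in[0,X_B]$ by player $B$ to some battlefield $b\in\{1,2\}$ such that $u_B(p)>\pi_B(\sigma^* )$.
   Context: Two-battlefield asymmetric setting: valuations $v_{A,1}=\alpha$, $v_{A,2}=1-\alpha$, $v_{B,1}=1-\alpha$, $v_{B,2}=\alpha$, budgets $X_A,X_B>0$. Define, for $x,y\ge0$, $L(x,y)=\frac{x}{2y}$ if $0\le x\le y$, $y>0$; $L(x,y)=1-\frac{y}{2x}$ if $x>y\ge0$; $L(0,0)=\tfrac12$. Let $c=\frac{(1-\alpha)^2}{\alpha}+\frac{\alpha^2}{1-\alpha}$, $r=X_A/X_B$, and $S:(0,\infty)\to\mathbb R$: $S(\sigma)=\sigma^2(c\sigma-r)$ on $(0,\frac{\alpha}{1-\alpha})$; $S(\sigma)=\frac{\alpha^2}{1-\alpha}(\sigma^3-r)+\alpha\sigma(1-r\sigma)$ on $[\frac{\alpha}{1-\alpha},\frac{1-\alpha}{\alpha})$; $S(\sigma)=\sigma-rc$ on $[\frac{1-\alpha}{\alpha},\infty)$. Player $B$'s equilibrium payoff for a zero $\sigma$: $\pi_B(\sigma)=1-\frac{\sigma}{2}$ if $\sigma\in(0,\frac{\alpha}{1-\alpha})$;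 $\pi_B(\sigma)=1-\alpha-\frac{\alpha\sigma}{2}+\frac{\alpha^2}{2\sigma(1-\alpha)}$ if $\sigma\in[\frac{\alpha}{1-\alpha},\frac{1-\alpha}{\alpha})$; $\pi_B(\sigma)=\frac{c}{2\sigma}$ if $\sigma\ge\frac{1-\alpha}{\alpha}$. Pre-commitment: $B$ places $p\in[0,X_B]$ on one battlefield $b\in\{1,2\}$; $u_A^{M}(p)=v_{A,b}+(1-v_{A,b})L(X_A-p,X_B-p)$ (for $p\le X_A$), $u_A^{W}(p)=(1-v_{A,b})L(X_A,X_B-p)$; $A$'s response is $\mathtt A_b(p)=\mathtt M$ if $p\le X_A$ and $u_A^M(p)>u_A^W(p)$, else $\mathtt A_b(p)=\mathtt W$ (ties go to withdrawing). $B$'s payoff is $u_B(p)=(1-v_{B,b})L(X_B-p,X_A-p)$ if $\mathtt A_b(p)=\mathtt M$ and $u_B(p)=v_{B,b}+(1-v_{B,b})L(X_B-p,X_A)$ if $\mathtt A_b(p)=\mathtt W$. *)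

theory Defs
  imports Complex_Main
begin

definition L :: "real \<Rightarrow> real \<Rightarrow> real" where
  "L x y = (if x = 0 \<and> y = 0 then 1/2
            else if x \<le> y then x / (2*y)
            else 1 - y / (2*x))"

text \<open>Valuations; battlefields are 1 and 2.\<close>
definition vA :: "real \<Rightarrow> nat \<Rightarrow> real" where
  "vA \<alpha> b = (if b = 1 then \<alpha> else 1 - \<alpha>)"

definition vB :: "real \<Rightarrow> nat \<Rightarrow> real" where
  "vB \<alpha> b = (if b = 1 then 1 - \<alpha> else \<alpha>)"

definition cc :: "real \<Rightarrow> real" where
  "cc \<alpha> = (1-\<alpha>)^2/\<alpha> + \<alpha>^2/(1-\<alpha>)"

definition S :: "real \<Rightarrow> real \<Rightarrow> real \<Rightarrow> real \<Rightarrow> real" where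
  "S \<alpha> XA XB \<sigma> =
    (let r = XA / XB in
     if \<sigma> < \<alpha>/(1-\<alpha>) then \<sigma>^2 * (cc \<alpha> * \<sigma> - r)
     else if \<sigma> < (1-\<alpha>)/\<alpha> then \<alpha>^2/(1-\<alpha>) * (\<sigma>^3 - r) + \<alpha>*\<sigma>*(1 - r*\<sigma>)
     else \<sigma> - r * cc \<alpha>)"

definition piB :: "real \<Rightarrow> real \<Rightarrow> real" where
  "piB \<alpha> \<sigma> =
    (if \<sigma> < \<alpha>/(1-\<alpha>) then 1 - \<sigma>/2
     else if \<sigma> < (1-\<alpha>)/\<alpha> then 1 - \<alpha> - \<alpha>*\<sigma>/2 + \<alpha>^2/(2*\<sigma>*(1-\<alpha>))
     else cc \<alpha> / (2*\<sigma>))"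

definition uAM :: "real \<Rightarrow> real \<Rightarrow> real \<Rightarrow> nat \<Rightarrow> real \<Rightarrow> real" where
  "uAM \<alpha> XA XB b p = vA \<alpha> b + (1 - vA \<alpha> b) * L (XA - p) (XB - p)"

definition uAW :: "real \<Rightarrow> real \<Rightarrow> real \<Rightarrow> nat \<Rightarrow> real \<Rightarrow> real" where
  "uAW \<alpha> XA XB b p = (1 - vA \<alpha> b) * L XA (XB - p)"

text \<open>A's response: True = match (M), False = withdraw (W); ties go to W.\<close>
definition A_matches :: "real \<Rightarrow> real \<Rightarrow> real \<Rightarrow> nat \<Rightarrow> real \<Rightarrow> bool" where
  "A_matches \<alpha> XA XB b p \<longleftrightarrow> p \<le> XA \<and> uAM \<alpha> XA XB b p > uAW \<alpha> XA XB b p"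

definition uB :: "real \<Rightarrow> real \<Rightarrow> real \<Rightarrow> nat \<Rightarrow> real \<Rightarrow> real" where
  "uB \<alpha> XA XB b p =
    (if A_matches \<alpha> XA XB b p then (1 - vB \<alpha> b) * L (XB - p) (XA - p)
     else vB \<alpha> b + (1 - vB \<alpha> b) * L (XB - p) XA)"

end

theory Submission
  imports Defs
begin

text \<open>Write \<beta> = \<alpha>/(1-\<alpha>). The two-sided bound on XB/XA forces \<beta> \<le> 1/2 and
  2\<beta> \<le> XB/XA < 1. As XA > XB, the solution function is negative at 1 and has a zero beyond 1,
  so the unique zero \<sigma>* exceeds 1, which gives \<pi>_B(\<sigma>*) < 1 - \<alpha>. On the other hand, if B
  pre-commits p = (XB + 2\<beta>XA)/2 to battlefield 1, the lower bound on XB/XA makes withdrawal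
  a best response of A, and then B wins battlefield 1 and secures at least v_{B,1} = 1 - \<alpha>.\<close>

lemma cubic_ge_two:
  fixes q :: real
  assumes "2 < q" and "q \<le> 3"
  shows "2 \<le> q^2 - q^3/4"
proof -
  have "(q - 1)^2 \<le> 2^2" using assms by (intro power_mono) auto
  then have "0 \<le> (q - 2) * (5 - (q - 1)^2)" using assms by simp
  moreover have "q^2 - q^3/4 - 2 = (q - 2) * (5 - (q - 1)^2) / 4"
    by (simp add: algebra_simps power2_eq_square power3_eq_cube)
  ultimately show ?thesis by linarith
qed

lemma budget_window_imp_beta_le_half:
  fixes \<beta> t :: real
  assumes "0 < \<beta>" and "\<beta> \<le> 1"
    and lo: "sqrt (8*\<beta>) - 2*\<beta> \<le> t" and hi: "t < sqrt (1/(3*\<beta>))"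
  shows "\<beta> \<le> 1/2"
proof (rule ccontr)
  assume "\<not> \<beta> \<le> 1/2"
  define q where "q = sqrt (8*\<beta>)"
  have qq: "q^2 = 8*\<beta>" using \<open>0 < \<beta>\<close> by (simp add: q_def)
  have "2 < q" unfolding q_def using \<open>\<not> \<beta> \<le> 1/2\<close> by (simp add: real_less_rsqrt)
  moreover have "q \<le> 3" unfolding q_def using \<open>\<beta> \<le> 1\<close> by (simp add: real_le_lsqrt)
  ultimately have "2 \<le> q^2 - q^3/4" by (rule cubic_ge_two)
  have f0: "0 \<le> q - q^2/4" using \<open>2 < q\<close> \<open>q \<le> 3\<close> by (simp add: power2_eq_square field_simps)
  have lo': "q - q^2/4 \<le> t" using lo qq by (simp add: q_def)
  have "(q - q^2/4)^2 \<le> t^2" using lo' f0 by (intro power_mono)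
  also have "t^2 < (sqrt (1/(3*\<beta>)))^2" using hi lo' f0 by (intro power_strict_mono) auto
  also have "\<dots> = 1/(3*\<beta>)" using \<open>0 < \<beta>\<close> by simp
  finally have "(q - q^2/4)^2 * (3*\<beta>) < 1" using \<open>0 < \<beta>\<close> by (simp add: field_simps)
  moreover have "(q - q^2/4)^2 * (3*\<beta>) = 3/8 * (q^2 - q^3/4)^2"
    using qq by (simp add: algebra_simps power2_eq_square power3_eq_cube)
  moreover have "2^2 \<le> (q^2 - q^3/4)^2" using \<open>2 \<le> q^2 - q^3/4\<close> by (intro power_mono) auto
  ultimately show False by simp
qed

lemma two_beta_le_sqrt_bound:
  fixes \<beta> :: real
  assumes "0 \<le> \<beta>" and "\<beta> \<le> 1/2"
  shows "2*\<beta> \<le> sqrt (8*\<beta>) - 2*\<beta>"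
proof -
  have "\<beta> * \<beta> \<le> \<beta> * (1/2)" using assms by (intro mult_left_mono)
  then have "(4*\<beta>)^2 \<le> 8*\<beta>" by (simp add: power2_eq_square)
  then have "4*\<beta> \<le> sqrt (8*\<beta>)" using assms by (simp add: real_le_rsqrt)
  then show ?thesis by simp
qed

lemma S_has_zero_gt_one:
  fixes \<alpha> XA XB :: real
  assumes "0 < \<alpha>" and "\<alpha> < 1/2" and r1: "1 < XA/XB"
  shows "\<exists>\<sigma>>1. S \<alpha> XA XB \<sigma> = 0"
proof -
  define r where "r = XA/XB"
  define m where "m = (1-\<alpha>)/\<alpha>"
  define g where "g \<sigma> = \<alpha>^2/(1-\<alpha>) * (\<sigma>^3 - r) + \<alpha>*\<sigma>*(1 - r*\<sigma>)" for \<sigma>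
  have lt1: "\<alpha>/(1-\<alpha>) < 1" and m1: "1 < m" using assms by (simp_all add: m_def field_simps)
  have S_mid: "S \<alpha> XA XB \<sigma> = g \<sigma>" if "1 \<le> \<sigma>" "\<sigma> < m" for \<sigma>
    using that lt1 unfolding S_def g_def r_def m_def Let_def by auto
  have S_top: "S \<alpha> XA XB \<sigma> = \<sigma> - r * cc \<alpha>" if "m \<le> \<sigma>" for \<sigma>
    using that lt1 m1 unfolding S_def r_def m_def Let_def by auto
  have g_m: "g m = m - r * cc \<alpha>"
    using assms unfolding g_def m_def cc_def by (simp add: field_simps power2_eq_square power3_eq_cube)
  have "g 1 = (\<alpha>^2/(1-\<alpha>) + \<alpha>) * (1 - r)" by (simp add: g_def algebra_simps)
  moreover have "0 < \<alpha>^2/(1-\<alpha>) + \<alpha>" using assms by (intro add_pos_pos divide_pos_pos) auto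
  ultimately have g1: "g 1 < 0" using r1 by (simp add: r_def mult_pos_neg)
  show ?thesis
  proof (cases "0 \<le> g m")
    case True
    have "\<exists>x\<ge>1. x \<le> m \<and> g x = 0"
      by (rule IVT) (use g1 True m1 assms in \<open>auto simp: g_def intro!: continuous_intros\<close>)
    then obtain x where x: "1 \<le> x" "x \<le> m" "g x = 0" by blast
    with g1 have "1 < x" by (cases "x = 1") auto
    moreover have "S \<alpha> XA XB x = 0"
      using x S_mid S_top g_m by (cases "x < m") auto
    ultimately show ?thesis by blast
  next
    case False
    then have "m \<le> r * cc \<alpha>" using g_m by simp
    then show ?thesis using S_top m1 by (intro exI[of _ "r * cc \<alpha>"]) auto
  qed
qed

lemma piB_lt_one_minus_alpha:
  fixes \<alpha> \<sigma> :: real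
  assumes "0 < \<alpha>" and "\<alpha> < 1/2" and "1 < \<sigma>"
  shows "piB \<alpha> \<sigma> < 1 - \<alpha>"
proof -
  have lt1: "\<alpha>/(1-\<alpha>) < 1" using assms by (simp add: field_simps)
  then have ratio: "\<alpha>/(1-\<alpha>) / \<sigma> < 1"
    using divide_less_eq_1_pos[of \<sigma> "\<alpha>/(1-\<alpha>)"] assms by linarith
  show ?thesis
  proof (cases "\<sigma> < (1-\<alpha>)/\<alpha>")
    case True
    have "\<alpha>^2/(2*\<sigma>*(1-\<alpha>)) = \<alpha>/2 * (\<alpha>/(1-\<alpha>) / \<sigma>)" by (simp add: power2_eq_square)
    also have "\<dots> < \<alpha>/2 * 1"
      using ratio assms by (intro mult_strict_left_mono) auto
    also have "\<dots> < \<alpha>*\<sigma>/2" using assms by simp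
    finally show ?thesis using True assms lt1 unfolding piB_def by auto
  next
    case False
    define m where "m = (1-\<alpha>)/\<alpha>"
    have "m \<le> \<sigma>" and "0 < m" using False assms by (simp_all add: m_def)
    have "\<alpha>^3 < (1-\<alpha>)^3" using assms by (intro power_strict_mono) auto
    then have "\<alpha>^3/(1-\<alpha>)^2 < (1-\<alpha>)^3/(1-\<alpha>)^2" using assms by (intro divide_strict_right_mono) auto
    then have "\<alpha>^3/(1-\<alpha>)^2 < 1-\<alpha>" using assms by (simp add: power2_eq_square power3_eq_cube)
    moreover have "cc \<alpha> / (2*\<sigma>) \<le> cc \<alpha> / (2*m)"
      using \<open>m \<le> \<sigma>\<close> \<open>0 < m\<close> assms by (intro divide_left_mono) (auto simp: cc_def)
    moreover have "cc \<alpha> / (2*m) = ((1-\<alpha>) + \<alpha>^3/(1-\<alpha>)^2)/2"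
    proof -
      define b where "b = 1 - \<alpha>"
      have "0 < b" using assms by (simp add: b_def)
      then show ?thesis using assms unfolding cc_def m_def b_def[symmetric]
        by (simp add: field_simps power2_eq_square power3_eq_cube)
    qed
    ultimately show ?thesis using False assms lt1 unfolding piB_def by auto
  qed
qed

lemma A_matches_battlefield_1_iff:
  fixes \<alpha> XA XB p :: real
  assumes "\<alpha> < 1" and "0 \<le> p" and "p \<le> XB" and "XB < XA"
  shows "A_matches \<alpha> XA XB 1 p \<longleftrightarrow> (1-\<alpha>) * ((XB-p)*p) < 2*\<alpha>*XA*(XA-p)"
proof -
  have L_match: "L (XA-p) (XB-p) = 1 - (XB-p)/(2*(XA-p))"
    and L_withdraw: "L XA (XB-p) = 1 - (XB-p)/(2*XA)"
    using assms unfolding L_def by auto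
  have "uAW \<alpha> XA XB 1 p - uAM \<alpha> XA XB 1 p
      = ((1-\<alpha>) * ((XB-p)*p) - 2*\<alpha>*XA*(XA-p)) / (2*XA*(XA-p))"
    using assms unfolding uAW_def uAM_def vA_def L_match L_withdraw by (simp add: field_simps)
  moreover have "0 < 2*XA*(XA-p)" using assms by simp
  ultimately have "uAW \<alpha> XA XB 1 p - uAM \<alpha> XA XB 1 p < 0
      \<longleftrightarrow> (1-\<alpha>) * ((XB-p)*p) - 2*\<alpha>*XA*(XA-p) < 0"
    by (auto simp: divide_less_0_iff)
  then show ?thesis using assms unfolding A_matches_def by linarith
qed

lemma uB_battlefield_1_withdrawn:
  fixes \<alpha> XA XB p :: real
  assumes "\<not> A_matches \<alpha> XA XB 1 p" and "0 \<le> p" and "p \<le> XB" and "XB < XA"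
  shows "uB \<alpha> XA XB 1 p = 1 - \<alpha> + \<alpha> * ((XB-p)/(2*XA))"
proof -
  have "L (XB-p) XA = (XB-p)/(2*XA)" using assms unfolding L_def by auto
  then show ?thesis using assms unfolding uB_def vB_def by simp
qed

lemma withdrawal_commitment_exists:
  fixes \<alpha> XA XB :: real
  defines "\<beta> \<equiv> \<alpha>/(1-\<alpha>)"
  assumes "0 < \<alpha>" and "\<alpha> < 1" and "0 < XB" and "XB < XA"
    and two_beta: "2*\<beta> \<le> XB/XA" and window: "sqrt (8*\<beta>) - 2*\<beta> \<le> XB/XA"
  shows "\<exists>p\<in>{0..XB}. 1 - \<alpha> \<le> uB \<alpha> XA XB 1 p"
proof -
  define p where "p = (XB + 2*\<beta>*XA)/2"
  have "0 < \<beta>" and XA0: "0 < XA" using assms by simp_all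
  have "2*\<beta>*XA \<le> XB" using two_beta XA0 by (simp add: le_divide_eq)
  then have p: "0 \<le> p" "p \<le> XB" using \<open>0 < \<beta>\<close> XA0 \<open>0 < XB\<close> by (simp_all add: p_def)
  have "8*\<beta> \<le> (XB/XA + 2*\<beta>)^2" using window by (intro sqrt_le_D) simp
  then have "8*\<beta>*XA^2 \<le> (XB + 2*\<beta>*XA)^2"
    using XA0 by (simp add: power_divide field_simps)
  \<comment> \<open>p is the vertex of the parabola p \<mapsto> (XB-p)*p - 2*\<beta>*XA*(XA-p)\<close>
  moreover have "(XB-p)*p - 2*\<beta>*XA*(XA-p) = ((XB + 2*\<beta>*XA)^2 - 8*\<beta>*XA^2)/4"
    unfolding p_def power2_eq_square by (simp add: field_simps)
  ultimately have "2*\<beta>*XA*(XA-p) \<le> (XB-p)*p" by simp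
  then have "2*\<alpha>*XA*(XA-p) \<le> (1-\<alpha>) * ((XB-p)*p)"
    using assms by (simp add: field_simps)
  then have "\<not> A_matches \<alpha> XA XB 1 p"
    using A_matches_battlefield_1_iff p assms by simp
  then have "uB \<alpha> XA XB 1 p = 1 - \<alpha> + \<alpha> * ((XB-p)/(2*XA))"
    using uB_battlefield_1_withdrawn p assms by blast
  moreover have "0 \<le> \<alpha> * ((XB-p)/(2*XA))" using p assms XA0 by simp
  ultimately show ?thesis using p by force
qed

theorem theorem3:
  fixes \<alpha> XA XB \<sigma>s :: real
  assumes "0 < \<alpha>" and "\<alpha> \<le> 1/2"
    and "0 < XA" and "0 < XB"
    and "sqrt (8*\<alpha>/(1-\<alpha>)) - 2*\<alpha>/(1-\<alpha>) \<le> XB / XA"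
    and "XB / XA < min 1 (sqrt ((1-\<alpha>)/(3*\<alpha>)))"
    and "0 < \<sigma>s" and "S \<alpha> XA XB \<sigma>s = 0"
    and "\<forall>\<sigma>>0. S \<alpha> XA XB \<sigma> = 0 \<longrightarrow> \<sigma> = \<sigma>s"
  shows "\<exists>b\<in>{1::nat, 2}. \<exists>p\<in>{0..XB}. uB \<alpha> XA XB b p > piB \<alpha> \<sigma>s"
proof -
  define \<beta> where "\<beta> = \<alpha>/(1-\<alpha>)"
  have "0 < \<beta>" and "\<beta> \<le> 1" using assms(1,2) by (simp_all add: \<beta>_def field_simps)
  have window: "sqrt (8*\<beta>) - 2*\<beta> \<le> XB/XA" using assms(5) by (simp add: \<beta>_def)
  have "(1-\<alpha>)/(3*\<alpha>) = 1/(3*\<beta>)" using assms(1,2) by (simp add: \<beta>_def)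
  then have "XB/XA < 1" and "XB/XA < sqrt (1/(3*\<beta>))" using assms(6) by simp_all
  have "\<beta> \<le> 1/2"
    using \<open>0 < \<beta>\<close> \<open>\<beta> \<le> 1\<close> window \<open>XB/XA < sqrt (1/(3*\<beta>))\<close>
    by (rule budget_window_imp_beta_le_half)
  then have "\<alpha> < 1/2" using assms(1,2) by (simp add: \<beta>_def field_simps)
  have "1 < XA/XB" using \<open>XB/XA < 1\<close> assms(3,4) by (simp add: field_simps)
  then obtain \<sigma> where "1 < \<sigma>" and "S \<alpha> XA XB \<sigma> = 0"
    using S_has_zero_gt_one assms(1) \<open>\<alpha> < 1/2\<close> by blast
  then have "1 < \<sigma>s" using assms(9) by force
  then have "piB \<alpha> \<sigma>s < 1 - \<alpha>" using piB_lt_one_minus_alpha assms(1) \<open>\<alpha> < 1/2\<close> by blast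
  have "2*\<beta> \<le> XB/XA"
    using two_beta_le_sqrt_bound[of \<beta>] \<open>0 < \<beta>\<close> \<open>\<beta> \<le> 1/2\<close> window by linarith
  moreover have "XB < XA" using \<open>XB/XA < 1\<close> assms(3) by (simp add: divide_less_eq)
  ultimately have "\<exists>p\<in>{0..XB}. 1 - \<alpha> \<le> uB \<alpha> XA XB 1 p"
    using window assms(1,4) \<open>\<alpha> < 1/2\<close> unfolding \<beta>_def
    by (intro withdrawal_commitment_exists) auto
  with \<open>piB \<alpha> \<sigma>s < 1 - \<alpha>\<close> show ?thesis by force
qed

end
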